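(* For all integers $m\geq n\geq k\geq 3$, $$rb(K_{m,n},kK_2)=ext(m,n,(k-1)K_2)+2=m(k-2)+2.$$
   Context: $kK_2$ denotes a matching with $k$ edges, and $K_{m,n}$ the complete bipartite graph with parts of sizes $m$ and $n$. For a graph $H$, $ext(m,n,H)$ is the maximum number of edges of a bipartite graph with bipartition $A\cup B$, $|A|=m$, $|B|=n$, containing no subgraph isomorphic to $H$. An edge-coloring contains a rainbow copy of $H$ if there is a subgraph isomorphic to $H$ whose edges have pairwise distinct colors. $rb(G,H)$ is the minimum number $r$ such that every edge-coloring of $G$ using at least $r$ colors contains a rainbow copy of $H$ (equivalently, one plus the maximum number of colors in an edge-coloring of $G$ with no rainbow $H$). *)

theory Defs
  imports Main
begin

(* Graphs are given by their edge sets: an edge is a 2-element vertex set. *)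

definition contains_copy :: "'v set set \<Rightarrow> 'w set set \<Rightarrow> bool" where
  "contains_copy G H \<longleftrightarrow>
     (\<exists>f. inj_on f (\<Union>H) \<and> (\<forall>e\<in>H. f ` e \<in> G))"

definition has_rainbow :: "'v set set \<Rightarrow> ('v set \<Rightarrow> nat) \<Rightarrow> 'w set set \<Rightarrow> bool" where
  "has_rainbow G c H \<longleftrightarrow>
     (\<exists>f. inj_on f (\<Union>H) \<and> (\<forall>e\<in>H. f ` e \<in> G) \<and> inj_on (\<lambda>e. c (f ` e)) H)"

definition matching_graph :: "nat \<Rightarrow> (nat \<times> bool) set set" where
  "matching_graph k = {{(i, False), (i, True)} | i. i < k}"

definition Kmn :: "nat \<Rightarrow> nat \<Rightarrow> (nat + nat) set set" where
  "Kmn m n = {{Inl i, Inr j} | i j. i < m \<and> j < n}"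

definition ext :: "nat \<Rightarrow> nat \<Rightarrow> 'w set set \<Rightarrow> nat" where
  "ext m n H = Max {card E | E. E \<subseteq> Kmn m n \<and> \<not> contains_copy E H}"

definition rb :: "'v set set \<Rightarrow> 'w set set \<Rightarrow> nat" where
  "rb G H = (LEAST r. \<forall>c :: 'v set \<Rightarrow> nat. card (c ` G) \<ge> r \<longrightarrow> has_rainbow G c H)"

end

theory Submission
  imports Defs "HOL-Combinatorics.Transposition"
begin

(*
  Lower bounds: the m(k-2) edges at the first k-2 vertices of the second part contain no
  (k-1)-matching; colouring them injectively and all other edges with one further colour gives
  m(k-2)+1 colours without a rainbow kK_2, since a rainbow matching uses at most one edge of the
  second kind.

  Upper bounds rest on Koenig's theorem: a bipartite graph without (j+1)-matching has a vertex
  cover X, Y with |X| + |Y| <= j, hence at most j*m edges.  For rb, one edge of each colour gives a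
  rainbow graph G with m(k-2)+2 edges; if there is no rainbow kK_2, G has a cover with
  |X| + |Y| = k-1.  For u outside X and v outside Y, the edges of G avoiding u, v and the colour of
  uv contain no (k-1)-matching (it would extend by uv), so there are at most (k-2)(m-1) of them;
  counting the remaining edges leaves no slack, so G contains the blocks (A - X) x Y and
  X x (B - Y) and an edge g with the colour of uv away from u and v.  Matchings of these blocks
  avoiding g complete uv to a rainbow kK_2, except in two degenerate shapes with n = k, which are
  excluded by playing two such pairs uv, u'v' against each other.
*)

section \<open>Matchings in bipartite graphs\<close>

definition matching :: "('a \<times> 'b) set \<Rightarrow> bool" where
  "matching M \<longleftrightarrow> inj_on fst M \<and> inj_on snd M"

lemma matching_subset: "matching M \<Longrightarrow> N \<subseteq> M \<Longrightarrow> matching N"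
  unfolding matching_def by (meson inj_on_subset)

lemma matching_empty [simp]: "matching {}"
  by (simp add: matching_def)

lemma matching_insert:
  assumes "matching M" "fst p \<notin> fst ` M" "snd p \<notin> snd ` M"
  shows "matching (insert p M)"
  using assms unfolding matching_def by (auto simp: inj_on_insert)

lemma matching_Un:
  assumes "matching M" "matching N" "fst ` M \<inter> fst ` N = {}" "snd ` M \<inter> snd ` N = {}"
  shows "matching (M \<union> N)"
  using assms unfolding matching_def inj_on_Un by blast

lemma card_Un_disjoint_fst:
  assumes "fst ` M \<inter> fst ` N = {}" "finite M" "finite N"
  shows "card (M \<union> N) = card M + card N"
  using assms by (intro card_Un_disjoint) auto

lemma matching_converse: "matching (M\<inverse>) \<longleftrightarrow> matching M"
proof -
  have "inj_on fst (M\<inverse>) \<longleftrightarrow> inj_on snd M" "inj_on snd (M\<inverse>) \<longleftrightarrow> inj_on fst M"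
    unfolding inj_on_def by (auto simp: Ball_def)
  then show ?thesis
    unfolding matching_def by blast
qed

lemma matching_image_Pair: "inj_on h L \<Longrightarrow> matching ((\<lambda>x. (x, h x)) ` L)"
  unfolding matching_def by (auto simp: inj_on_def)

lemma card_matching_le_snd: "matching M \<Longrightarrow> snd ` M \<subseteq> R \<Longrightarrow> finite R \<Longrightarrow> card M \<le> card R"
  unfolding matching_def by (meson card_inj_on_le)

lemma obtain_submatching_of_card:
  assumes "matching M" "finite M" "j \<le> card M"
  obtains N where "N \<subseteq> M" "matching N" "card N = j"
  by (meson assms matching_subset obtain_subset_with_card_n)

section \<open>Hall's theorem with deficiency and Koenig's theorem\<close>

definition hall_condition :: "('a \<times> 'b) set \<Rightarrow> 'a set \<Rightarrow> nat \<Rightarrow> bool" where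
  "hall_condition E L d \<longleftrightarrow> (\<forall>S\<subseteq>L. card S \<le> card (E `` S) + d)"

lemma hall_conditionD: "hall_condition E L d \<Longrightarrow> S \<subseteq> L \<Longrightarrow> card S \<le> card (E `` S) + d"
  unfolding hall_condition_def by blast

lemma hall_condition_subset: "hall_condition E L d \<Longrightarrow> L' \<subseteq> L \<Longrightarrow> hall_condition E L' d"
  unfolding hall_condition_def by blast

lemma hall_condition_remove_tight_set:
  assumes hall: "hall_condition E L d" and "finite E" "finite L"
    and S: "S \<subseteq> L" "card S = card (E `` S) + d"
  shows "hall_condition (E - UNIV \<times> E `` S) (L - S) 0"
  unfolding hall_condition_def
proof (intro allI impI)
  fix T assume T: "T \<subseteq> L - S"
  let ?E' = "E - UNIV \<times> E `` S"
  have "E `` (T \<union> S) = ?E' `` T \<union> E `` S" "?E' `` T \<inter> E `` S = {}"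
    by blast+
  then have "card (E `` (T \<union> S)) = card (?E' `` T) + card (E `` S)"
    using \<open>finite E\<close> by (simp add: card_Un_disjoint)
  moreover have "card (T \<union> S) = card T + card S"
    using T finite_subset[OF T finite_Diff[OF \<open>finite L\<close>]] finite_subset[OF S(1) \<open>finite L\<close>]
    by (intro card_Un_disjoint) auto
  moreover have "card (T \<union> S) \<le> card (E `` (T \<union> S)) + d"
    using T S(1) by (intro hall_conditionD[OF hall]) blast
  ultimately show "card T \<le> card (?E' `` T) + 0"
    using S(2) by linarith
qed

lemma hall_condition_remove_edge:
  assumes "finite E" and loose: "\<And>S. S \<subseteq> L \<Longrightarrow> S \<noteq> {} \<Longrightarrow> S \<noteq> L \<Longrightarrow> card S < card (E `` S) + d"
    and "a \<in> L"
  shows "hall_condition (E - UNIV \<times> {b}) (L - {a}) d"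
  unfolding hall_condition_def
proof (intro allI impI)
  fix T assume T: "T \<subseteq> L - {a}"
  let ?E' = "E - UNIV \<times> {b}"
  show "card T \<le> card (?E' `` T) + d"
  proof (cases "T = {}")
    case False
    have "E `` T \<subseteq> insert b (?E' `` T)"
      by blast
    then have "card (E `` T) \<le> card (insert b (?E' `` T))"
      using \<open>finite E\<close> by (intro card_mono) auto
    also have "\<dots> \<le> card (?E' `` T) + 1"
      using \<open>finite E\<close> by (simp add: card_insert_if)
    finally have "card (E `` T) \<le> card (?E' `` T) + 1" .
    moreover have "card T < card (E `` T) + d"
      using T False \<open>a \<in> L\<close> by (intro loose) auto
    ultimately show ?thesis
      by linarith
  qed simp
qed

lemma defect_matching_combine:
  assumes "finite E" "finite L" "S \<subseteq> L"
    and M1: "M1 \<subseteq> E \<inter> S \<times> UNIV" "matching M1" "card S \<le> card M1 + d"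
    and M2: "M2 \<subseteq> (E - UNIV \<times> E `` S) \<inter> (L - S) \<times> UNIV" "matching M2" "card (L - S) \<le> card M2"
  shows "\<exists>M \<subseteq> E \<inter> L \<times> UNIV. matching M \<and> card L \<le> card M + d"
proof (intro exI conjI)
  have fin: "finite M1" "finite M2"
    using M1(1) M2(1) \<open>finite E\<close> by (auto intro: finite_subset)
  have fst_disjoint: "fst ` M1 \<inter> fst ` M2 = {}"
    using M1(1) M2(1) by auto
  have "snd ` M1 \<subseteq> E `` S" "snd ` M2 \<inter> E `` S = {}"
    using M1(1) M2(1) by force+
  then have "snd ` M1 \<inter> snd ` M2 = {}"
    by blast
  with fst_disjoint show "matching (M1 \<union> M2)"
    using matching_Un[OF M1(2) M2(2)] by blast
  have "card L = card S + card (L - S)"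
    using \<open>S \<subseteq> L\<close> \<open>finite L\<close> by (simp add: card_Diff_subset card_mono finite_subset)
  then show "card L \<le> card (M1 \<union> M2) + d"
    using card_Un_disjoint_fst[OF fst_disjoint fin] M1(3) M2(3) by linarith
  show "M1 \<union> M2 \<subseteq> E \<inter> L \<times> UNIV"
    using M1(1) M2(1) \<open>S \<subseteq> L\<close> by blast
qed

lemma defect_matching_insert:
  assumes "finite E" "finite L" "a \<in> L" "(a, b) \<in> E"
    and M: "M \<subseteq> (E - UNIV \<times> {b}) \<inter> (L - {a}) \<times> UNIV" "matching M" "card (L - {a}) \<le> card M + d"
  shows "\<exists>M \<subseteq> E \<inter> L \<times> UNIV. matching M \<and> card L \<le> card M + d"
proof (intro exI conjI)
  have "fst (a, b) \<notin> fst ` M" "snd (a, b) \<notin> snd ` M"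
    using M(1) by auto
  then show "matching (insert (a, b) M)"
    by (rule matching_insert[OF M(2)])
  have "finite M" "(a, b) \<notin> M"
    using M(1) \<open>finite E\<close> by (auto intro: finite_subset)
  moreover have "card L = Suc (card (L - {a}))"
    using card_Suc_Diff1[OF \<open>finite L\<close> \<open>a \<in> L\<close>] by simp
  ultimately show "card L \<le> card (insert (a, b) M) + d"
    using M(3) by simp
  show "insert (a, b) M \<subseteq> E \<inter> L \<times> UNIV"
    using M(1) assms(3,4) by blast
qed

theorem defect_hall:
  assumes "finite L" "finite E" "hall_condition E L d"
  shows "\<exists>M \<subseteq> E \<inter> L \<times> UNIV. matching M \<and> card L \<le> card M + d"
  using assms
proof (induction "card L" arbitrary: L E d rule: less_induct)
  case less
  show ?case
  proof (cases "\<exists>S\<subseteq>L. S \<noteq> {} \<and> S \<noteq> L \<and> card (E `` S) + d \<le> card S")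
    case True
    then obtain S where S: "S \<subseteq> L" "S \<noteq> {}" "S \<noteq> L" "card (E `` S) + d \<le> card S"
      by blast
    have "finite S"
      using S(1) less.prems(1) by (rule finite_subset)
    have tight: "card S = card (E `` S) + d"
      using S(4) hall_conditionD[OF less.prems(3) S(1)] by linarith
    have "S \<subset> L"
      using S(1,3) by blast
    then have "card S < card L"
      by (rule psubset_card_mono[OF less.prems(1)])
    then obtain M1 where M1: "M1 \<subseteq> E \<inter> S \<times> UNIV" "matching M1" "card S \<le> card M1 + d"
      using less.hyps[OF _ \<open>finite S\<close> less.prems(2) hall_condition_subset[OF less.prems(3) S(1)]]
      by blast
    have "0 < card S"
      using S(2) \<open>finite S\<close> by (simp add: card_gt_0_iff)
    then have "card (L - S) < card L"
      using card_Diff_subset[OF \<open>finite S\<close> S(1)] \<open>card S < card L\<close> by linarith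
    then obtain M2 where M2: "M2 \<subseteq> (E - UNIV \<times> E `` S) \<inter> (L - S) \<times> UNIV" "matching M2"
      "card (L - S) \<le> card M2 + 0"
      using less.hyps[OF _ finite_Diff[OF less.prems(1)] finite_Diff[OF less.prems(2)]
          hall_condition_remove_tight_set[OF less.prems(3,2,1) S(1) tight]]
      by blast
    show ?thesis
      using M2(3) by (intro defect_matching_combine[OF less.prems(2,1) S(1) M1 M2(1,2)]) simp
  next
    case False
    then have loose: "card S < card (E `` S) + d" if "S \<subseteq> L" "S \<noteq> {}" "S \<noteq> L" for S
      using that by (meson not_le)
    show ?thesis
    proof (cases "card L \<le> d")
      case True
      then show ?thesis
        by (intro exI[of _ "{}"]) simp
    next
      case False
      have "card L \<le> card (E `` L) + d"
        using hall_conditionD[OF less.prems(3)] by blast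
      then have "E `` L \<noteq> {}"
        using False by auto
      then obtain a b where ab: "a \<in> L" "(a, b) \<in> E"
        by blast
      have "card (L - {a}) < card L"
        using less.prems(1) ab(1) by (rule card_Diff1_less)
      then obtain M where "M \<subseteq> (E - UNIV \<times> {b}) \<inter> (L - {a}) \<times> UNIV" "matching M"
        "card (L - {a}) \<le> card M + d"
        using less.hyps[OF _ finite_Diff[OF less.prems(1)] finite_Diff[OF less.prems(2)]
            hall_condition_remove_edge[OF less.prems(2) loose ab(1)]]
        by blast
      then show ?thesis
        by (rule defect_matching_insert[OF less.prems(2,1) ab])
    qed
  qed
qed

theorem koenig_cover:
  assumes "finite L" "finite E" "E \<subseteq> L \<times> R"
    and small: "\<And>M. M \<subseteq> E \<Longrightarrow> matching M \<Longrightarrow> card M \<le> j"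
  obtains X Y where "X \<subseteq> L" "Y \<subseteq> R" "card X + card Y \<le> j" "\<And>a b. (a, b) \<in> E \<Longrightarrow> a \<in> X \<or> b \<in> Y"
proof (cases "card L \<le> j")
  case True
  show ?thesis
  proof (rule that[of L "{}"])
    show "a \<in> L \<or> b \<in> {}" if "(a, b) \<in> E" for a b
      using that assms(3) by blast
  qed (use True in simp_all)
next
  case False
  define d where "d = card L - Suc j"
  have "\<not> hall_condition E L d"
  proof
    assume "hall_condition E L d"
    then obtain M where M: "M \<subseteq> E \<inter> L \<times> UNIV" "matching M" "card L \<le> card M + d"
      using defect_hall[OF assms(1,2)] by blast
    have "card M \<le> j"
      using M(1) by (intro small[OF _ M(2)]) blast
    with M(3) False show False
      unfolding d_def by linarith
  qed
  then obtain T where T: "T \<subseteq> L" "\<not> card T \<le> card (E `` T) + d"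
    unfolding hall_condition_def by blast
  show ?thesis
  proof (rule that[of "L - T" "E `` T"])
    have "card (L - T) = card L - card T"
      using T(1) finite_subset[OF T(1) assms(1)] by (rule card_Diff_subset[rotated])
    with T(2) False card_mono[OF assms(1) T(1)] show "card (L - T) + card (E `` T) \<le> j"
      unfolding d_def by linarith
    show "a \<in> L - T \<or> b \<in> E `` T" if "(a, b) \<in> E" for a b
    proof (cases "a \<in> T")
      case False
      then show ?thesis
        using that assms(3) by blast
    qed (use that in blast)
    show "E `` T \<subseteq> R"
      using assms(3) by (rule Image_subset)
  qed blast
qed

lemma card_le_by_vertex_cover:
  assumes "finite P" "finite Q" "E \<subseteq> P \<times> Q" "card Q \<le> card P" "X \<subseteq> P" "Y \<subseteq> Q"
    and cover: "\<And>a b. (a, b) \<in> E \<Longrightarrow> a \<in> X \<or> b \<in> Y"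
  shows "card E \<le> (card X + card Y) * card P"
proof -
  have "E \<subseteq> X \<times> Q \<union> P \<times> Y"
    using assms(3) cover by fastforce
  moreover have "finite (X \<times> Q \<union> P \<times> Y)"
    using finite_subset[OF assms(5,1)] finite_subset[OF assms(6,2)] assms(1,2) by simp
  ultimately have "card E \<le> card (X \<times> Q \<union> P \<times> Y)"
    by (simp add: card_mono)
  also have "\<dots> \<le> card (X \<times> Q) + card (P \<times> Y)"
    by (rule card_Un_le)
  also have "\<dots> \<le> card X * card P + card P * card Y"
    using assms(4) by (simp add: card_cartesian_product)
  also have "\<dots> = (card X + card Y) * card P"
    by (simp add: algebra_simps)
  finally show ?thesis .
qed

lemma card_le_by_matching_bound:
  assumes "finite P" "finite Q" "E \<subseteq> P \<times> Q" "card Q \<le> card P"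
    and small: "\<And>M. M \<subseteq> E \<Longrightarrow> matching M \<Longrightarrow> card M \<le> j"
  shows "card E \<le> j * card P"
proof -
  have "finite E"
    using assms(1-3) by (meson finite_SigmaI finite_subset)
  then obtain X Y where "X \<subseteq> P" "Y \<subseteq> Q" "card X + card Y \<le> j"
    and "\<And>a b. (a, b) \<in> E \<Longrightarrow> a \<in> X \<or> b \<in> Y"
    using koenig_cover[OF assms(1) _ assms(3) small] by blast
  then show ?thesis
    using card_le_by_vertex_cover[OF assms(1-4)] by (meson dual_order.trans mult_le_mono1)
qed

lemma inj_on_avoiding_pair:
  assumes "finite L" "finite R" "card L \<le> card R" "g \<in> L \<times> R \<Longrightarrow> 2 \<le> card R"
  obtains h where "inj_on h L" "h ` L \<subseteq> R" "\<And>x. x \<in> L \<Longrightarrow> (x, h x) \<noteq> g"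
proof -
  obtain h0 where h0: "h0 ` L \<subseteq> R" "inj_on h0 L"
    using card_le_inj[OF assms(1-3)] by blast
  show ?thesis
  proof (cases "g \<in> L \<times> R \<and> h0 (fst g) = snd g")
    case False
    show ?thesis
    proof (rule that[OF h0(2,1)])
      show "(x, h0 x) \<noteq> g" if "x \<in> L" for x
      proof
        assume "(x, h0 x) = g"
        then have "g \<in> L \<times> R \<and> h0 (fst g) = snd g"
          using that h0(1) by force
        with False show False ..
      qed
    qed
  next
    case True
    then have "card (R - {snd g}) = card R - 1" "2 \<le> card R"
      using assms(4) by (auto simp: mem_Times_iff)
    then have "R - {snd g} \<noteq> {}"
      by (intro notI) simp
    then obtain b where b: "b \<in> R" "b \<noteq> snd g"
      by blast
    let ?h = "transpose (snd g) b \<circ> h0"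
    show ?thesis
    proof (rule that[of ?h])
      show "inj_on ?h L"
        using h0(2) by (simp add: comp_inj_on)
      have "transpose (snd g) b ` R = R"
        using True b(1) by (simp add: mem_Times_iff)
      then show "?h ` L \<subseteq> R"
        using image_mono[OF h0(1), of "transpose (snd g) b"] by (simp add: image_comp)
      show "(x, ?h x) \<noteq> g" if "x \<in> L" for x
        using True b(2) by (cases "x = fst g") auto
    qed
  qed
qed

lemma matching_in_Times_avoiding:
  assumes "finite L" "finite R" "card L \<le> card R" "g \<in> L \<times> R \<Longrightarrow> 2 \<le> card R"
  obtains M where "M \<subseteq> L \<times> R - {g}" "matching M" "card M = card L"
proof -
  obtain h where h: "inj_on h L" "h ` L \<subseteq> R" "\<And>x. x \<in> L \<Longrightarrow> (x, h x) \<noteq> g"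
    using inj_on_avoiding_pair[OF assms] by blast
  have "card ((\<lambda>x. (x, h x)) ` L) = card L"
    by (rule card_image) (simp add: inj_on_def)
  then show ?thesis
    using h by (intro that[of "(\<lambda>x. (x, h x)) ` L"] matching_image_Pair) auto
qed

lemma matching_in_Times_avoiding':
  assumes "finite L" "finite R" "card R \<le> card L" "g \<in> L \<times> R \<Longrightarrow> 2 \<le> card L"
  obtains M where "M \<subseteq> L \<times> R - {g}" "matching M" "card M = card R"
proof -
  have "prod.swap g \<in> R \<times> L \<Longrightarrow> 2 \<le> card L"
    using assms(4) by (cases g) auto
  then obtain M where "M \<subseteq> R \<times> L - {prod.swap g}" "matching M" "card M = card R"
    using matching_in_Times_avoiding[OF assms(2,1,3)] by blast
  then show ?thesis
    by (intro that[of "M\<inverse>"]) (auto simp: matching_converse card_inverse)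
qed

lemma singleton_if_card_less_2:
  assumes "finite L" "x \<in> L" "\<not> 2 \<le> card L"
  shows "L = {x}"
  using assms card_le_Suc0_iff_eq[OF assms(1)] by auto

section \<open>A rainbow graph with many edges has a rainbow matching\<close>

locale rainbow_counterexample =
  fixes A :: "'a set" and B :: "'b set" and k :: nat
    and col :: "'a \<times> 'b \<Rightarrow> 'c" and G :: "('a \<times> 'b) set"
  assumes finite_A: "finite A" and finite_B: "finite B"
    and k_ge_3: "3 \<le> k" and k_le_card_B: "k \<le> card B" and card_B_le_A: "card B \<le> card A"
    and G_subset: "G \<subseteq> A \<times> B" and inj_col_G: "inj_on col G"
    and card_G: "card G = card A * (k - 2) + 2"
    and no_rainbow: "\<And>M. M \<subseteq> A \<times> B \<Longrightarrow> matching M \<Longrightarrow> inj_on col M \<Longrightarrow> card M < k"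
begin

lemma finite_G: "finite G"
  using finite_subset[OF G_subset] finite_A finite_B by blast

lemma col_not_in_image_other_edges:
  assumes "g \<in> G" "N \<subseteq> G - {g}"
  shows "col g \<notin> col ` N"
proof
  assume "col g \<in> col ` N"
  then obtain e where "e \<in> N" "col g = col e"
    by blast
  then have "g = e"
    using assms inj_col_G by (meson DiffD1 inj_onD subsetD)
  with \<open>e \<in> N\<close> assms(2) show False
    by blast
qed

lemma card_colour_class_le_1: "card {e \<in> G. col e = x} \<le> 1"
proof -
  have "inj_on col {e \<in> G. col e = x}"
    by (rule inj_on_subset[OF inj_col_G]) blast
  then have "card {e \<in> G. col e = x} = card (col ` {e \<in> G. col e = x})"
    by (rule card_image[symmetric])
  also have "\<dots> \<le> card {x}"
    by (intro card_mono) auto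
  finally show ?thesis
    by simp
qed

lemma rainbow_extendable_card_less:
  assumes "M \<subseteq> A \<times> B" "matching M" "inj_on col M" "u \<in> A" "v \<in> B"
    and "u \<notin> fst ` M" "v \<notin> snd ` M" "col (u, v) \<notin> col ` M"
  shows "Suc (card M) < k"
proof -
  have "matching (insert (u, v) M)"
    using matching_insert[OF assms(2)] assms(6,7) by simp
  moreover have "inj_on col (insert (u, v) M)"
    using assms(3,8) unfolding inj_on_insert by blast
  moreover have "insert (u, v) M \<subseteq> A \<times> B"
    using assms(1,4,5) by blast
  ultimately have "card (insert (u, v) M) < k"
    using no_rainbow by blast
  moreover have "finite M" "(u, v) \<notin> M"
    using finite_subset[OF assms(1)] finite_A finite_B assms(6) by force+
  ultimately show ?thesis
    by simp
qed

lemma card_edges_avoiding_le: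
  assumes "u \<in> A" "v \<in> B"
  shows "card {e \<in> G. fst e \<noteq> u \<and> snd e \<noteq> v \<and> col e \<noteq> col (u, v)} \<le> (k - 2) * (card A - 1)"
proof -
  let ?G' = "{e \<in> G. fst e \<noteq> u \<and> snd e \<noteq> v \<and> col e \<noteq> col (u, v)}"
  have "card M \<le> k - 2" if M: "M \<subseteq> ?G'" "matching M" for M
  proof -
    have "M \<subseteq> G"
      using M(1) by blast
    then have "Suc (card M) < k"
      using M assms G_subset inj_on_subset[OF inj_col_G]
      by (intro rainbow_extendable_card_less) auto
    then show ?thesis
      by linarith
  qed
  moreover have "?G' \<subseteq> (A - {u}) \<times> (B - {v})"
    using G_subset by auto
  moreover have "card (B - {v}) \<le> card (A - {u})"
    using assms card_B_le_A by simp
  ultimately have "card ?G' \<le> (k - 2) * card (A - {u})"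
    using finite_A finite_B by (intro card_le_by_matching_bound) auto
  then show ?thesis
    using assms(1) by simp
qed

lemma obtain_vertex_cover:
  obtains X Y where "X \<subseteq> A" "Y \<subseteq> B" "card X + card Y \<le> k - 1"
    "\<And>a b. (a, b) \<in> G \<Longrightarrow> a \<in> X \<or> b \<in> Y"
proof -
  have "card M \<le> k - 1" if "M \<subseteq> G" "matching M" for M
    using no_rainbow[OF _ that(2)] that(1) G_subset inj_on_subset[OF inj_col_G that(1)] by fastforce
  then show ?thesis
    using koenig_cover[OF finite_A finite_G G_subset] that by blast
qed

end

locale rainbow_counterexample_cover = rainbow_counterexample +
  fixes X :: "'a set" and Y :: "'b set"
  assumes X_subset: "X \<subseteq> A" and Y_subset: "Y \<subseteq> B" and card_cover_le: "card X + card Y \<le> k - 1"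
    and cover: "\<And>a b. (a, b) \<in> G \<Longrightarrow> a \<in> X \<or> b \<in> Y"
begin

lemma finite_X: "finite X" and finite_Y: "finite Y"
  using finite_subset[OF X_subset finite_A] finite_subset[OF Y_subset finite_B] .

lemma card_cover: "card X + card Y = k - 1"
proof (rule ccontr)
  assume "card X + card Y \<noteq> k - 1"
  then have "card X + card Y \<le> k - 2"
    using card_cover_le by linarith
  moreover have "card G \<le> (card X + card Y) * card A"
    using card_le_by_vertex_cover[OF finite_A finite_B G_subset card_B_le_A X_subset Y_subset cover] .
  ultimately have "card G \<le> card A * (k - 2)"
    by (metis mult.commute mult_le_mono2 order_trans)
  then show False
    using card_G by linarith
qed

lemma card_X_less: "card X < card A" and card_Y_less: "card Y < card B"
  using card_cover k_ge_3 k_le_card_B card_B_le_A by linarith+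

lemma card_uncovered: "card (A - X) = card A - card X" "card (B - Y) = card B - card Y"
  using X_subset Y_subset finite_X finite_Y by (simp_all add: card_Diff_subset)

lemma uncovered_nonempty: "A - X \<noteq> {}" "B - Y \<noteq> {}"
  using card_mono[OF finite_X, of A] card_mono[OF finite_Y, of B] card_X_less card_Y_less by auto

lemma edges_at_uncovered_left:
  assumes "u \<in> A - X"
  shows "{e \<in> G. fst e = u} \<subseteq> {u} \<times> Y"
  using assms cover by force

lemma edges_at_uncovered_right:
  assumes "v \<in> B - Y"
  shows "{e \<in> G. snd e = v} \<subseteq> X \<times> {v}"
  using assms cover by force

lemma card_G_as_bound_sum: "card G = (k - 2) * (card A - 1) + card Y + card X + 1"
proof -
  obtain a where "card A = a + 1"
    using card_X_less by (intro that[of "card A - 1"]) simp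
  moreover obtain j where "k = j + 2"
    using k_ge_3 by (intro that[of "k - 2"]) simp
  ultimately show ?thesis
    using card_G card_cover by (simp add: algebra_simps)
qed

lemma uncovered_pair_forces:
  assumes u: "u \<in> A - X" and v: "v \<in> B - Y"
  shows "{u} \<times> Y \<subseteq> G" "X \<times> {v} \<subseteq> G" "\<exists>g\<in>G. col g = col (u, v) \<and> fst g \<noteq> u \<and> snd g \<noteq> v"
proof -
  define G' where "G' = {e \<in> G. fst e \<noteq> u \<and> snd e \<noteq> v \<and> col e \<noteq> col (u, v)}"
  define Gu where "Gu = {e \<in> G. fst e = u}"
  define Gv where "Gv = {e \<in> G. snd e = v}"
  define Gc where "Gc = {e \<in> G. col e = col (u, v) \<and> fst e \<noteq> u \<and> snd e \<noteq> v}"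
  have "card G = card (G' \<union> Gu \<union> Gv \<union> Gc)"
    unfolding G'_def Gu_def Gv_def Gc_def by (rule arg_cong[of _ _ card]) blast
  then have "card G \<le> card G' + card Gu + card Gv + card Gc"
    using card_Un_le[of "G' \<union> Gu \<union> Gv" Gc] card_Un_le[of "G' \<union> Gu" Gv] card_Un_le[of G' Gu]
    by linarith
  moreover have "card G' \<le> (k - 2) * (card A - 1)"
    unfolding G'_def using u v by (intro card_edges_avoiding_le) auto
  moreover have "card Gc \<le> 1"
    using card_colour_class_le_1[of "col (u, v)"] card_mono[OF _ subsetI, of "{e \<in> G. col e = col (u, v)}" Gc]
      finite_G unfolding Gc_def by fastforce
  moreover have "card Gu \<le> card Y" "card Gv \<le> card X"
    using card_mono[OF _ edges_at_uncovered_left[OF u]] card_mono[OF _ edges_at_uncovered_right[OF v]]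
      finite_X finite_Y unfolding Gu_def Gv_def by (simp_all add: card_cartesian_product)
  ultimately have tight: "card Gu = card Y" "card Gv = card X" "card Gc = 1"
    using card_G_as_bound_sum by linarith+
  have "Gu = {u} \<times> Y"
    using card_subset_eq[OF _ edges_at_uncovered_left[OF u, folded Gu_def]] tight(1) finite_Y
    by (simp add: card_cartesian_product)
  then show "{u} \<times> Y \<subseteq> G"
    unfolding Gu_def by blast
  have "Gv = X \<times> {v}"
    using card_subset_eq[OF _ edges_at_uncovered_right[OF v, folded Gv_def]] tight(2) finite_X
    by (simp add: card_cartesian_product)
  then show "X \<times> {v} \<subseteq> G"
    unfolding Gv_def by blast
  obtain g where "Gc = {g}"
    using tight(3) by (rule card_1_singletonE)
  then show "\<exists>g\<in>G. col g = col (u, v) \<and> fst g \<noteq> u \<and> snd g \<noteq> v"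
    unfolding Gc_def by blast
qed

lemma uncovered_blocks_in_G: "(A - X) \<times> Y \<subseteq> G" "X \<times> (B - Y) \<subseteq> G"
proof -
  obtain u v where "u \<in> A - X" "v \<in> B - Y"
    using uncovered_nonempty by blast
  then show "(A - X) \<times> Y \<subseteq> G" "X \<times> (B - Y) \<subseteq> G"
    using uncovered_pair_forces(1)[of _ v] uncovered_pair_forces(2)[of u] by blast+
qed

lemma matching_in_left_block:
  assumes u: "u \<in> A - X" and not_tight: "\<not> (A - X = {u, fst g} \<and> card Y = 1)"
  obtains M where "M \<subseteq> (A - X - {u}) \<times> Y - {g}" "matching M" "card M = card Y"
proof (rule matching_in_Times_avoiding'[of "A - X - {u}" Y g])
  have "card (A - X - {u}) = card A - card X - 1"
    using u card_uncovered(1) by simp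
  then show card_le: "card Y \<le> card (A - X - {u})"
    using card_cover k_le_card_B card_B_le_A by linarith
  show "2 \<le> card (A - X - {u})" if g: "g \<in> (A - X - {u}) \<times> Y"
  proof (rule ccontr)
    assume "\<not> 2 \<le> card (A - X - {u})"
    then have "A - X - {u} = {fst g}"
      using g finite_A by (intro singleton_if_card_less_2) auto
    moreover from this have "card Y = 1"
      using card_le g finite_Y by (auto simp: le_Suc_eq mem_Times_iff)
    ultimately show False
      using u not_tight by auto
  qed
qed (use finite_A finite_Y in auto)

lemma matching_in_right_block:
  assumes v: "v \<in> B - Y" and not_tight: "\<not> (B - Y = {v, snd g} \<and> card X = 1)"
  obtains M where "M \<subseteq> X \<times> (B - Y - {v}) - {g}" "matching M" "card M = card X"
proof (rule matching_in_Times_avoiding[of X "B - Y - {v}" g])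
  have "card (B - Y - {v}) = card B - card Y - 1"
    using v card_uncovered(2) by simp
  then show card_le: "card X \<le> card (B - Y - {v})"
    using card_cover k_le_card_B by linarith
  show "2 \<le> card (B - Y - {v})" if g: "g \<in> X \<times> (B - Y - {v})"
  proof (rule ccontr)
    assume "\<not> 2 \<le> card (B - Y - {v})"
    then have "B - Y - {v} = {snd g}"
      using g finite_B by (intro singleton_if_card_less_2) auto
    moreover from this have "card X = 1"
      using card_le g finite_X by (auto simp: le_Suc_eq mem_Times_iff)
    ultimately show False
      using v not_tight by auto
  qed
qed (use finite_B finite_X in auto)

text \<open>Unless one of the two blocks is degenerate, their matchings avoiding \<open>g\<close> complete the
  edge \<open>(u, v)\<close> to a rainbow matching with \<open>k\<close> edges.\<close>

lemma rainbow_obstruction: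
  assumes u: "u \<in> A - X" and v: "v \<in> B - Y" and g: "g \<in> G" "col g = col (u, v)"
  shows "A - X = {u, fst g} \<and> card Y = 1 \<or> B - Y = {v, snd g} \<and> card X = 1"
proof (rule ccontr)
  assume "\<not> ?thesis"
  then obtain M1 M2 where M1: "M1 \<subseteq> (A - X - {u}) \<times> Y - {g}" "matching M1" "card M1 = card Y"
    and M2: "M2 \<subseteq> X \<times> (B - Y - {v}) - {g}" "matching M2" "card M2 = card X"
    using matching_in_left_block[OF u] matching_in_right_block[OF v] by metis
  have sub: "M1 \<union> M2 \<subseteq> G - {g}"
    using M1(1) M2(1) uncovered_blocks_in_G by blast
  have "fst ` M1 \<inter> fst ` M2 = {}" "snd ` M1 \<inter> snd ` M2 = {}"
    using M1(1) M2(1) by auto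
  moreover have "finite M1" "finite M2"
    using sub finite_G by (auto intro: finite_subset)
  ultimately have "matching (M1 \<union> M2)" "card (M1 \<union> M2) = k - 1"
    using matching_Un[OF M1(2) M2(2)] card_Un_disjoint_fst[of M1 M2] M1(3) M2(3) card_cover by auto
  moreover have "Suc (card (M1 \<union> M2)) < k"
  proof (rule rainbow_extendable_card_less)
    show "M1 \<union> M2 \<subseteq> A \<times> B" "inj_on col (M1 \<union> M2)"
      using sub G_subset inj_on_subset[OF inj_col_G] by blast+
    show "u \<notin> fst ` (M1 \<union> M2)" "v \<notin> snd ` (M1 \<union> M2)"
      using M1(1) M2(1) u v by auto
    show "col (u, v) \<notin> col ` (M1 \<union> M2)"
      using col_not_in_image_other_edges[OF g(1) sub] g(2) by simp
  qed (use u v \<open>matching (M1 \<union> M2)\<close> in auto)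
  ultimately show False
    using k_ge_3 by simp
qed

lemma obstruction_cases: "card (A - X) = 2 \<and> card Y = 1 \<or> card (B - Y) = 2 \<and> card X = 1"
proof -
  obtain u v where u: "u \<in> A - X" and v: "v \<in> B - Y"
    using uncovered_nonempty by blast
  then obtain g where g: "g \<in> G" "col g = col (u, v)" "fst g \<noteq> u" "snd g \<noteq> v"
    using uncovered_pair_forces(3) by blast
  from rainbow_obstruction[OF u v g(1,2)] show ?thesis
    using g(3,4) by (elim disjE) auto
qed

lemma card_B_eq_k: "card B = k"
  using obstruction_cases card_uncovered card_cover k_le_card_B card_B_le_A by linarith

lemma two_le_card_uncovered: "2 \<le> card (A - X)" "2 \<le> card (B - Y)"
  using obstruction_cases card_uncovered card_cover card_B_eq_k card_B_le_A k_ge_3 by linarith+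

lemma G_eq_cover_blocks: "G = X \<times> B \<union> (A - X) \<times> Y"
proof -
  have sub: "G \<subseteq> X \<times> B \<union> (A - X) \<times> Y"
    using G_subset cover by fastforce
  have "card (X \<times> B \<union> (A - X) \<times> Y) = card X * card B + card (A - X) * card Y"
    using finite_X finite_Y finite_A finite_B by (subst card_Un_disjoint) (auto simp: card_cartesian_product)
  also have "\<dots> = card G"
    using obstruction_cases
  proof
    assume "card (A - X) = 2 \<and> card Y = 1"
    moreover from this have "card A = k" "card X = k - 2"
      using card_uncovered card_cover card_B_eq_k card_B_le_A k_ge_3 by linarith+
    ultimately show ?thesis
      using card_G card_B_eq_k by simp
  next
    assume "card (B - Y) = 2 \<and> card X = 1"
    moreover from this have "card Y = k - 2"
      using card_uncovered card_cover card_B_eq_k by linarith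
    moreover obtain a where a: "card A = a + 1"
      using card_X_less by (intro that[of "card A - 1"]) simp
    moreover obtain j where "k = j + 2"
      using k_ge_3 by (intro that[of "k - 2"]) simp
    ultimately show ?thesis
      using card_G card_B_eq_k card_uncovered(1) by (simp add: algebra_simps)
  qed
  finally show ?thesis
    using card_subset_eq[OF _ sub] finite_A finite_B finite_X finite_Y by simp
qed

lemma obtain_two_uncovered:
  obtains u u' v v' where "u \<in> A - X" "u' \<in> A - X" "u \<noteq> u'" "v \<in> B - Y" "v' \<in> B - Y" "v \<noteq> v'"
proof -
  have "\<not> card (A - X) \<le> Suc 0" "\<not> card (B - Y) \<le> Suc 0"
    using two_le_card_uncovered by simp_all
  then have "\<exists>u\<in>A - X. \<exists>u'\<in>A - X. u \<noteq> u'" "\<exists>v\<in>B - Y. \<exists>v'\<in>B - Y. v \<noteq> v'"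
    unfolding card_le_Suc0_iff_eq[OF finite_Diff[OF finite_A]] card_le_Suc0_iff_eq[OF finite_Diff[OF finite_B]]
    by blast+
  then show ?thesis
    using that by blast
qed

lemma rainbow_obstruction_other:
  assumes "u \<in> A - X" "u' \<in> A - X" "u \<noteq> u'" "v \<in> B - Y" "v' \<in> B - Y" "v \<noteq> v'"
    and "g \<in> G" "col g = col (u, v)"
  shows "A - X = {u, u'} \<and> fst g = u' \<or> B - Y = {v, v'} \<and> snd g = v'"
  using rainbow_obstruction[OF assms(1,4,7,8)]
proof (elim disjE conjE)
  assume "A - X = {u, fst g}"
  moreover from this have "fst g = u'"
    using assms(2,3) by auto
  ultimately show ?thesis
    by simp
next
  assume "B - Y = {v, snd g}"
  moreover from this have "snd g = v'"
    using assms(5,6) by auto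
  ultimately show ?thesis
    by simp
qed

lemma inner_block_in_G:
  assumes "A - X = {u, u'} \<or> B - Y = {v, v'}"
  shows "(A - {u, u'}) \<times> (B - {v, v'}) \<subseteq> G"
  using assms G_eq_cover_blocks by auto

text \<open>Two uncovered pairs \<open>(u, v)\<close>, \<open>(u', v')\<close> with partner edges \<open>g\<close>, \<open>g'\<close>: each partner
  edge meets the other pair, so a perfect matching of the remaining complete block extends by
  both pairs to a rainbow matching with \<open>k\<close> edges.\<close>

lemma cover_impossible: False
proof -
  obtain u u' v v' where uv: "u \<in> A - X" "u' \<in> A - X" "u \<noteq> u'" "v \<in> B - Y" "v' \<in> B - Y" "v \<noteq> v'"
    by (rule obtain_two_uncovered)
  obtain g where g: "g \<in> G" "col g = col (u, v)" "fst g \<noteq> u" "snd g \<noteq> v"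
    using uncovered_pair_forces(3)[OF uv(1,4)] by blast
  obtain g' where g': "g' \<in> G" "col g' = col (u', v')" "fst g' \<noteq> u'" "snd g' \<noteq> v'"
    using uncovered_pair_forces(3)[OF uv(2,5)] by blast
  have og: "A - X = {u, u'} \<and> fst g = u' \<or> B - Y = {v, v'} \<and> snd g = v'"
    using rainbow_obstruction_other[OF uv g(1,2)] .
  have og': "fst g' = u \<or> snd g' = v"
    using rainbow_obstruction_other[OF uv(2,1) uv(3)[symmetric] uv(5,4) uv(6)[symmetric] g'(1,2)] by auto
  let ?L = "A - {u, u'}" and ?R = "B - {v, v'}"
  have "card ?R \<le> card ?L"
    using uv card_B_le_A by (simp add: card_Diff_subset)
  moreover have "(u, v) \<in> ?L \<times> ?R \<Longrightarrow> 2 \<le> card ?L"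
    by simp
  ultimately obtain M where M: "M \<subseteq> ?L \<times> ?R - {(u, v)}" "matching M" "card M = card ?R"
    by (rule matching_in_Times_avoiding'[OF finite_Diff[OF finite_A] finite_Diff[OF finite_B]])
  have "?L \<times> ?R \<subseteq> G"
    using og by (intro inner_block_in_G) blast
  moreover have "g \<notin> M" "g' \<notin> M"
    using M(1) og og' by auto
  ultimately have "M \<subseteq> G - {g, g'}"
    using M(1) by blast
  then have "col (u', v') \<notin> col ` M" "col (u, v) \<notin> col ` M"
    using col_not_in_image_other_edges[OF g'(1)] col_not_in_image_other_edges[OF g(1)] g(2) g'(2) by auto
  moreover have "col (u, v) \<noteq> col (u', v')"
    using og' g g' inj_col_G by (metis inj_on_contraD)
  moreover have "inj_on col M" "M \<subseteq> A \<times> B" "finite M"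
    using \<open>M \<subseteq> G - {g, g'}\<close> inj_on_subset[OF inj_col_G] finite_G G_subset
    by (auto intro: finite_subset)
  moreover have "u \<notin> fst ` M" "u' \<notin> fst ` M" "v \<notin> snd ` M" "v' \<notin> snd ` M" "(u', v') \<notin> M"
    using M(1) by auto
  ultimately have "Suc (card (insert (u', v') M)) < k"
    using uv M(2) by (intro rainbow_extendable_card_less matching_insert) (auto simp: inj_on_insert)
  then show False
    using M(3) uv \<open>finite M\<close> \<open>(u', v') \<notin> M\<close> card_B_eq_k by (simp add: card_Diff_subset)
qed

end

theorem rainbow_matching_exists:
  fixes col :: "'a \<times> 'b \<Rightarrow> 'c"
  assumes "finite A" "finite B" "3 \<le> k" "k \<le> card B" "card B \<le> card A"
    and "G \<subseteq> A \<times> B" "inj_on col G" "card G = card A * (k - 2) + 2"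
  shows "\<exists>M \<subseteq> A \<times> B. matching M \<and> card M = k \<and> inj_on col M"
proof (rule ccontr)
  assume none: "\<not> ?thesis"
  have "card M < k" if M: "M \<subseteq> A \<times> B" "matching M" "inj_on col M" for M
  proof (rule ccontr)
    assume "\<not> card M < k"
    then have "k \<le> card M"
      by simp
    moreover have "finite M"
      using finite_subset[OF M(1)] assms(1,2) by blast
    ultimately obtain N where N: "N \<subseteq> M" "matching N" "card N = k"
      using obtain_submatching_of_card[OF M(2)] by blast
    moreover have "N \<subseteq> A \<times> B" "inj_on col N"
      using N(1) M(1) inj_on_subset[OF M(3) N(1)] by auto
    ultimately show False
      using none by blast
  qed
  then interpret rainbow_counterexample A B k col G
    using assms by unfold_locales
  obtain X Y where "X \<subseteq> A" "Y \<subseteq> B" "card X + card Y \<le> k - 1" "\<And>a b. (a, b) \<in> G \<Longrightarrow> a \<in> X \<or> b \<in> Y"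
    using obtain_vertex_cover by blast
  then interpret rainbow_counterexample_cover A B k col G X Y
    by unfold_locales
  show False
    by (rule cover_impossible)
qed

section \<open>Copies of \<open>kK\<^sub>2\<close> in \<open>K\<^sub>m\<^sub>,\<^sub>n\<close> and matchings\<close>

definition bip_edge :: "'a \<times> 'b \<Rightarrow> ('a + 'b) set" where
  "bip_edge p = {Inl (fst p), Inr (snd p)}"

lemma inj_bip_edge: "inj bip_edge"
  unfolding bip_edge_def by (rule injI) (auto simp: doubleton_eq_iff prod_eq_iff)

lemma inj_on_bip_edge: "inj_on bip_edge M"
  using inj_bip_edge by (rule inj_on_subset) simp

lemma card_bip_edge_image: "card (bip_edge ` P) = card P"
  by (rule card_image[OF inj_on_bip_edge])

lemma bip_edge_image_subset_iff: "bip_edge ` P \<subseteq> bip_edge ` Q \<longleftrightarrow> P \<subseteq> Q"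
  by (rule inj_image_subset_iff[OF inj_bip_edge])

lemma Kmn_eq_image: "Kmn m n = bip_edge ` ({..<m} \<times> {..<n})"
  unfolding Kmn_def bip_edge_def by (auto simp: image_iff) blast+

lemma matching_graph_eq_image: "matching_graph k = (\<lambda>i. {(i, False), (i, True)}) ` {..<k}"
  unfolding matching_graph_def by auto

lemma card_matching_graph: "card (matching_graph k) = k"
  unfolding matching_graph_eq_image by (subst card_image) (auto simp: inj_on_def)

lemma Union_matching_graph: "\<Union>(matching_graph k) = {..<k} \<times> UNIV"
proof
  show "{..<k} \<times> UNIV \<subseteq> \<Union>(matching_graph k)"
  proof
    fix x assume "x \<in> ({..<k} \<times> UNIV :: (nat \<times> bool) set)"
    then have "x \<in> {(fst x, False), (fst x, True)}" "{(fst x, False), (fst x, True)} \<in> matching_graph k"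
      unfolding matching_graph_def by (cases "snd x"; auto simp: prod_eq_iff)+
    then show "x \<in> \<Union>(matching_graph k)"
      by blast
  qed
qed (auto simp: matching_graph_def)

lemma copy_edges_disjoint:
  assumes "inj_on f (\<Union>(matching_graph k))" "e \<in> matching_graph k" "e' \<in> matching_graph k"
    and "y \<in> f ` e" "y \<in> f ` e'"
  shows "e = e'"
proof -
  obtain x x' where "x \<in> e" "x' \<in> e'" "f x = f x'"
    using assms(4,5) by blast
  moreover have "x \<in> \<Union>(matching_graph k)" "x' \<in> \<Union>(matching_graph k)"
    using \<open>x \<in> e\<close> \<open>x' \<in> e'\<close> assms(2,3) by blast+
  ultimately have "x = x'"
    using inj_onD[OF assms(1)] by blast
  with \<open>x \<in> e\<close> \<open>x' \<in> e'\<close> show ?thesis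
    using assms(2,3) unfolding matching_graph_def by auto
qed

lemma inj_on_copy_edges:
  assumes "inj_on f (\<Union>(matching_graph k))"
  shows "inj_on (\<lambda>e. f ` e) (matching_graph k)"
proof (rule inj_onI)
  fix e e' assume "e \<in> matching_graph k" "e' \<in> matching_graph k" "f ` e = f ` e'"
  moreover obtain x where "x \<in> e"
    using \<open>e \<in> matching_graph k\<close> unfolding matching_graph_def by blast
  ultimately show "e = e'"
    using copy_edges_disjoint[OF assms, of e e' "f x"] by blast
qed

lemma matching_of_copy:
  assumes f: "inj_on f (\<Union>(matching_graph k))"
    and range: "(\<lambda>e. f ` e) ` matching_graph k \<subseteq> range bip_edge"
  obtains M where "bip_edge ` M = (\<lambda>e. f ` e) ` matching_graph k" "matching M" "card M = k"
proof -
  let ?F = "(\<lambda>e. f ` e) ` matching_graph k"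
  define M where "M = bip_edge -` ?F"
  have image_M: "bip_edge ` M = ?F"
    unfolding M_def image_vimage_eq using range by blast
  have "card M = k"
    using card_bip_edge_image[of M] card_image[OF inj_on_copy_edges[OF f]] card_matching_graph image_M
    by simp
  have same: "p = q" if pq: "p \<in> M" "q \<in> M" "x \<in> bip_edge p" "x \<in> bip_edge q" for p q x
  proof -
    obtain e e' where "e \<in> matching_graph k" "e' \<in> matching_graph k" "bip_edge p = f ` e" "bip_edge q = f ` e'"
      using pq(1,2) unfolding M_def by blast
    then have "bip_edge p = bip_edge q"
      using copy_edges_disjoint[OF f, of e e' x] pq(3,4) by simp
    then show "p = q"
      by (rule injD[OF inj_bip_edge])
  qed
  have "matching M"
    unfolding matching_def
  proof (intro conjI inj_onI)
    show "p = q" if pq: "p \<in> M" "q \<in> M" "fst p = fst q" for p q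
      using same[OF pq(1,2), of "Inl (fst p)"] pq(3) by (simp add: bip_edge_def)
    show "p = q" if pq: "p \<in> M" "q \<in> M" "snd p = snd q" for p q
      using same[OF pq(1,2), of "Inr (snd p)"] pq(3) by (simp add: bip_edge_def)
  qed
  then show ?thesis
    using that image_M \<open>card M = k\<close> by blast
qed

lemma copy_of_matching:
  assumes "finite M" "matching M" "card M = k"
  obtains f where "inj_on f (\<Union>(matching_graph k))" "(\<lambda>e. f ` e) ` matching_graph k = bip_edge ` M"
proof -
  obtain h where h: "bij_betw h {..<k} M"
    using ex_bij_betw_nat_finite[OF assms(1)] assms(3) by (auto simp: atLeast0LessThan)
  then have h_inj: "inj_on h {..<k}" and h_M: "\<And>i. i < k \<Longrightarrow> h i \<in> M"
    by (auto simp: bij_betw_def)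
  define f where "f = (\<lambda>(i, t). if t then Inr (snd (h i)) else Inl (fst (h i)))"
  have edge: "f ` {(i, False), (i, True)} = bip_edge (h i)" for i
    unfolding f_def bip_edge_def by auto
  show ?thesis
  proof (rule that)
    show "(\<lambda>e. f ` e) ` matching_graph k = bip_edge ` M"
      unfolding matching_graph_eq_image image_image edge
      using bij_betw_imp_surj_on[OF h] by (metis image_image)
    show "inj_on f (\<Union>(matching_graph k))"
      unfolding Union_matching_graph
    proof (rule inj_onI, clarsimp)
      fix i j t s assume ij: "i < k" "j < k" and "f (i, t) = f (j, s)"
      then have "t = s" "if t then snd (h i) = snd (h j) else fst (h i) = fst (h j)"
        unfolding f_def by (auto split: if_splits)
      moreover have "inj_on fst M" "inj_on snd M"
        using assms(2) unfolding matching_def by auto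
      ultimately have "h i = h j"
        using h_M[OF ij(1)] h_M[OF ij(2)] by (auto split: if_splits dest: inj_onD)
      then show "i = j \<and> t = s"
        using inj_onD[OF h_inj] ij \<open>t = s\<close> by blast
    qed
  qed
qed

lemma rainbow_matching_of_has_rainbow:
  assumes "has_rainbow (Kmn m n) c (matching_graph k)"
  shows "\<exists>M \<subseteq> {..<m} \<times> {..<n}. matching M \<and> card M = k \<and> inj_on (c \<circ> bip_edge) M"
proof -
  obtain f where f: "inj_on f (\<Union>(matching_graph k))" "\<forall>e\<in>matching_graph k. f ` e \<in> Kmn m n"
    and rainbow: "inj_on (\<lambda>e. c (f ` e)) (matching_graph k)"
    using assms unfolding has_rainbow_def by blast
  have in_Kmn: "(\<lambda>e. f ` e) ` matching_graph k \<subseteq> bip_edge ` ({..<m} \<times> {..<n})"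
    using f(2) unfolding Kmn_eq_image by blast
  then have "(\<lambda>e. f ` e) ` matching_graph k \<subseteq> range bip_edge"
    by blast
  then obtain M where M: "bip_edge ` M = (\<lambda>e. f ` e) ` matching_graph k" "matching M" "card M = k"
    by (rule matching_of_copy[OF f(1)])
  have "bip_edge ` M \<subseteq> bip_edge ` ({..<m} \<times> {..<n})"
    using in_Kmn M(1) by simp
  then have "M \<subseteq> {..<m} \<times> {..<n}"
    by (simp add: bip_edge_image_subset_iff)
  moreover have "inj_on c ((\<lambda>e. f ` e) ` matching_graph k)"
    using comp_inj_on_iff[OF inj_on_copy_edges[OF f(1)], of c] rainbow by (simp add: comp_def)
  then have "inj_on (c \<circ> bip_edge) M"
    using comp_inj_on_iff[OF inj_on_bip_edge[of M], of c] M(1) by simp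
  ultimately show ?thesis
    using M(2,3) by blast
qed

lemma has_rainbow_of_rainbow_matching:
  assumes "M \<subseteq> {..<m} \<times> {..<n}" "matching M" "card M = k" "inj_on (c \<circ> bip_edge) M"
  shows "has_rainbow (Kmn m n) c (matching_graph k)"
proof -
  have "finite M"
    using assms(1) by (rule finite_subset) simp
  obtain f where f: "inj_on f (\<Union>(matching_graph k))" "(\<lambda>e. f ` e) ` matching_graph k = bip_edge ` M"
    by (rule copy_of_matching[OF \<open>finite M\<close> assms(2,3)])
  have "\<forall>e\<in>matching_graph k. f ` e \<in> Kmn m n"
  proof
    fix e assume "e \<in> matching_graph k"
    then have "f ` e \<in> (\<lambda>e. f ` e) ` matching_graph k"
      by (rule imageI)
    then have "f ` e \<in> bip_edge ` M"
      unfolding f(2) .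
    then show "f ` e \<in> Kmn m n"
      unfolding Kmn_eq_image using image_mono[OF assms(1), of bip_edge] by blast
  qed
  moreover have "inj_on c (bip_edge ` M)"
    using comp_inj_on_iff[OF inj_on_bip_edge[of M], of c] assms(4) by simp
  then have "inj_on (\<lambda>e. c (f ` e)) (matching_graph k)"
    using comp_inj_on_iff[OF inj_on_copy_edges[OF f(1)], of c] f(2) by (simp add: comp_def)
  ultimately show ?thesis
    unfolding has_rainbow_def using f(1) by blast
qed

lemma has_rainbow_Kmn_iff:
  "has_rainbow (Kmn m n) c (matching_graph k) \<longleftrightarrow>
     (\<exists>M \<subseteq> {..<m} \<times> {..<n}. matching M \<and> card M = k \<and> inj_on (c \<circ> bip_edge) M)"
  using rainbow_matching_of_has_rainbow has_rainbow_of_rainbow_matching by blast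

lemma contains_copy_matching_graph_iff:
  assumes "E \<subseteq> range bip_edge" "finite E"
  shows "contains_copy E (matching_graph k) \<longleftrightarrow> (\<exists>M. bip_edge ` M \<subseteq> E \<and> matching M \<and> card M = k)"
proof
  assume "contains_copy E (matching_graph k)"
  then obtain f where f: "inj_on f (\<Union>(matching_graph k))" "\<forall>e\<in>matching_graph k. f ` e \<in> E"
    unfolding contains_copy_def by blast
  then have "(\<lambda>e. f ` e) ` matching_graph k \<subseteq> E"
    unfolding image_subset_iff by blast
  then have "(\<lambda>e. f ` e) ` matching_graph k \<subseteq> range bip_edge"
    using assms(1) by (rule order_trans)
  then obtain M where M: "bip_edge ` M = (\<lambda>e. f ` e) ` matching_graph k" "matching M" "card M = k"
    by (rule matching_of_copy[OF f(1)])
  have "bip_edge ` M \<subseteq> E"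
    unfolding M(1) by fact
  with M(2,3) show "\<exists>M. bip_edge ` M \<subseteq> E \<and> matching M \<and> card M = k"
    by blast
next
  assume "\<exists>M. bip_edge ` M \<subseteq> E \<and> matching M \<and> card M = k"
  then obtain M where M: "bip_edge ` M \<subseteq> E" "matching M" "card M = k"
    by blast
  have "finite M"
    using finite_imageD[OF finite_subset[OF M(1) assms(2)] inj_on_bip_edge] .
  then obtain f where f: "inj_on f (\<Union>(matching_graph k))" "(\<lambda>e. f ` e) ` matching_graph k = bip_edge ` M"
    by (rule copy_of_matching[OF _ M(2,3)])
  have "f ` e \<in> E" if "e \<in> matching_graph k" for e
  proof -
    have "f ` e \<in> (\<lambda>e. f ` e) ` matching_graph k"
      using that by (rule imageI)
    then show ?thesis
      using M(1) unfolding f(2) by blast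
  qed
  then show "contains_copy E (matching_graph k)"
    unfolding contains_copy_def using f(1) by blast
qed

section \<open>The extremal number and the rainbow number\<close>

lemma ext_eqI:
  assumes "\<And>E. E \<subseteq> Kmn m n \<Longrightarrow> \<not> contains_copy E H \<Longrightarrow> card E \<le> N"
    and "E0 \<subseteq> Kmn m n" "\<not> contains_copy E0 H" "card E0 = N"
  shows "ext m n H = N"
  unfolding ext_def
proof (rule Max_eqI)
  have "{card E |E. E \<subseteq> Kmn m n \<and> \<not> contains_copy E H} \<subseteq> card ` Pow (Kmn m n)"
    by blast
  moreover have "finite (Kmn m n)"
    unfolding Kmn_eq_image by simp
  ultimately show "finite {card E |E. E \<subseteq> Kmn m n \<and> \<not> contains_copy E H}"
    by (meson finite_Pow_iff finite_imageI finite_subset)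
qed (use assms in auto)

lemma rb_eqI:
  assumes "\<And>c. r \<le> card (c ` G) \<Longrightarrow> has_rainbow G c H"
    and "\<not> has_rainbow G c0 H" "r \<le> Suc (card (c0 ` G))"
  shows "rb G H = r"
  unfolding rb_def
proof (rule Least_equality)
  show "\<forall>c. r \<le> card (c ` G) \<longrightarrow> has_rainbow G c H"
    using assms(1) by blast
  show "r \<le> y" if "\<forall>c. y \<le> card (c ` G) \<longrightarrow> has_rainbow G c H" for y
    using that assms(2,3) by (cases "y \<le> card (c0 ` G)") auto
qed

lemma no_copy_in_columns:
  fixes m j :: nat
  shows "\<not> contains_copy (bip_edge ` ({..<m} \<times> {..<j})) (matching_graph (Suc j))"
proof -
  let ?E0 = "bip_edge ` ({..<m} \<times> {..<j})"
  have "card M \<le> j" if M: "bip_edge ` M \<subseteq> ?E0" "matching M" for M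
  proof -
    have "snd ` M \<subseteq> {..<j}"
      using M(1) unfolding bip_edge_image_subset_iff by auto
    then show ?thesis
      using card_matching_le_snd[OF M(2) _ finite_lessThan] by simp
  qed
  moreover have "contains_copy ?E0 (matching_graph (Suc j)) \<longleftrightarrow>
      (\<exists>M. bip_edge ` M \<subseteq> ?E0 \<and> matching M \<and> card M = Suc j)"
    by (rule contains_copy_matching_graph_iff) auto
  ultimately show ?thesis
    by (metis Suc_n_not_le_n)
qed

lemma card_le_if_no_copy:
  assumes "n \<le> m" "E \<subseteq> Kmn m n" "\<not> contains_copy E (matching_graph (Suc j))"
  shows "card E \<le> m * j"
proof -
  have graph: "E \<subseteq> range bip_edge" "finite E"
    using assms(2) unfolding Kmn_eq_image by (auto intro: finite_subset)
  define P where "P = {p \<in> {..<m} \<times> {..<n}. bip_edge p \<in> E}"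
  have P: "P \<subseteq> {..<m} \<times> {..<n}"
    unfolding P_def by blast
  have E_eq: "E = bip_edge ` P"
    using assms(2) unfolding P_def Kmn_eq_image by blast
  have small: "card M \<le> j" if M: "M \<subseteq> P" "matching M" for M
  proof (rule ccontr)
    assume "\<not> card M \<le> j"
    then have "Suc j \<le> card M"
      by simp
    moreover have "finite M"
      using finite_subset[OF M(1) finite_subset[OF P]] by simp
    ultimately obtain N where N: "N \<subseteq> M" "matching N" "card N = Suc j"
      using obtain_submatching_of_card[OF M(2)] by blast
    have "bip_edge ` N \<subseteq> E"
      unfolding E_eq using N(1) M(1) by blast
    then have "contains_copy E (matching_graph (Suc j))"
      using contains_copy_matching_graph_iff[OF graph] N(2,3) by blast
    with assms(3) show False ..
  qed
  have "card P \<le> j * card {..<m}"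
    using card_le_by_matching_bound[OF finite_lessThan finite_lessThan P _ small] assms(1) by simp
  then show ?thesis
    unfolding E_eq card_bip_edge_image by (simp add: mult.commute)
qed

lemma ext_matching_graph:
  assumes "j \<le> n" "n \<le> m"
  shows "ext m n (matching_graph (Suc j)) = m * j"
proof (rule ext_eqI[OF card_le_if_no_copy[OF assms(2)] _ no_copy_in_columns])
  show "bip_edge ` ({..<m} \<times> {..<j}) \<subseteq> Kmn m n"
    unfolding Kmn_eq_image bip_edge_image_subset_iff using assms(1) by auto
  show "card (bip_edge ` ({..<m} \<times> {..<j})) = m * j"
    by (simp add: card_bip_edge_image card_cartesian_product)
qed

lemma no_rainbow_if_zero_outside_columns:
  assumes "\<And>p. p \<in> {..<m} \<times> {..<n} - {..<m} \<times> {..<j} \<Longrightarrow> c (bip_edge p) = 0"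
  shows "\<not> has_rainbow (Kmn m n) c (matching_graph (j + 2))"
  unfolding has_rainbow_Kmn_iff
proof (intro notI, elim exE conjE)
  let ?T = "{..<m} \<times> {..<j}"
  fix M assume M: "M \<subseteq> {..<m} \<times> {..<n}" "matching M" "card M = j + 2" "inj_on (c \<circ> bip_edge) M"
  have "snd ` (M \<inter> ?T) \<subseteq> {..<j}"
    by auto
  then have "card (M \<inter> ?T) \<le> j"
    using card_matching_le_snd[OF matching_subset[OF M(2) Int_lower1] _ finite_lessThan] by simp
  moreover have "card (M - ?T) \<le> 1"
  proof -
    have "c (bip_edge p) = 0" if "p \<in> M - ?T" for p
      using that M(1) by (intro assms) blast
    then have "(c \<circ> bip_edge) ` (M - ?T) \<subseteq> {0}"
      by auto
    then have "card ((c \<circ> bip_edge) ` (M - ?T)) \<le> card {0::nat}"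
      by (rule card_mono[rotated]) simp
    then show ?thesis
      using card_image[OF inj_on_subset[OF M(4) Diff_subset]] by simp
  qed
  moreover have "card M \<le> card (M \<inter> ?T) + card (M - ?T)"
    using card_Un_le[of "M \<inter> ?T" "M - ?T"] by (simp add: Int_Diff_Un)
  ultimately show False
    using M(3) by linarith
qed

lemma rainbow_free_colouring:
  assumes "j < n" "0 < m"
  obtains c :: "(nat + nat) set \<Rightarrow> nat"
  where "m * j + 1 \<le> card (c ` Kmn m n)" "\<not> has_rainbow (Kmn m n) c (matching_graph (j + 2))"
proof -
  let ?T = "{..<m} \<times> {..<j}"
  obtain c0 :: "(nat + nat) set \<Rightarrow> nat" where c0: "inj_on c0 (bip_edge ` ?T)"
    using finite_imp_inj_to_nat_seg[of "bip_edge ` ?T"] by blast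
  define c where "c e = (if e \<in> bip_edge ` ?T then Suc (c0 e) else 0)" for e
  have c_pair: "c (bip_edge p) = (if p \<in> ?T then Suc (c0 (bip_edge p)) else 0)" for p
    unfolding c_def by (simp add: inj_image_mem_iff[OF inj_bip_edge])
  show ?thesis
  proof (rule that[of c])
    have "inj_on c (bip_edge ` ?T)"
      using c0 unfolding c_def inj_on_def by auto
    then have card_T: "card (c ` bip_edge ` ?T) = m * j"
      by (simp add: card_image card_bip_edge_image card_cartesian_product)
    have zero: "0 \<notin> c ` bip_edge ` ?T"
      using c_pair by auto
    have "c (bip_edge (0, j)) = 0" "(0, j) \<in> {..<m} \<times> {..<n}"
      using assms c_pair by auto
    moreover have "?T \<subseteq> {..<m} \<times> {..<n}"
      using assms(1) by auto
    ultimately have "insert 0 (c ` bip_edge ` ?T) \<subseteq> c ` Kmn m n"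
      unfolding Kmn_eq_image insert_subset by (metis image_eqI image_mono)
    then have "card (insert 0 (c ` bip_edge ` ?T)) \<le> card (c ` Kmn m n)"
      by (rule card_mono[rotated]) (simp add: Kmn_eq_image)
    with card_T zero show "m * j + 1 \<le> card (c ` Kmn m n)"
      by simp
    show "\<not> has_rainbow (Kmn m n) c (matching_graph (j + 2))"
      using c_pair by (intro no_rainbow_if_zero_outside_columns) auto
  qed
qed

lemma has_rainbow_if_many_colours:
  assumes "3 \<le> k" "k \<le> n" "n \<le> m" "m * (k - 2) + 2 \<le> card (c ` Kmn m n)"
  shows "has_rainbow (Kmn m n) c (matching_graph k)"
proof -
  let ?AB = "{..<m} \<times> {..<n}"
  have "\<exists>U \<subseteq> ?AB. inj_on (c \<circ> bip_edge) U \<and> (c \<circ> bip_edge) ` ?AB = (c \<circ> bip_edge) ` U"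
    using subset_image_inj[of "(c \<circ> bip_edge) ` ?AB" "c \<circ> bip_edge" ?AB] by simp
  then obtain G0 where G0: "G0 \<subseteq> ?AB" "inj_on (c \<circ> bip_edge) G0" "(c \<circ> bip_edge) ` ?AB = (c \<circ> bip_edge) ` G0"
    by blast
  have "c ` Kmn m n = (c \<circ> bip_edge) ` G0"
    using G0(3) unfolding Kmn_eq_image by (simp add: image_comp)
  then have "card G0 = card (c ` Kmn m n)"
    using card_image[OF G0(2)] by simp
  then obtain G where G: "G \<subseteq> G0" "card G = m * (k - 2) + 2"
    using obtain_subset_with_card_n[of "m * (k - 2) + 2" G0] assms(4) by auto
  have "\<exists>M \<subseteq> ?AB. matching M \<and> card M = k \<and> inj_on (c \<circ> bip_edge) M"
    using G G0(1) inj_on_subset[OF G0(2) G(1)] assms(1-3)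
    by (intro rainbow_matching_exists) auto
  then show ?thesis
    unfolding has_rainbow_Kmn_iff .
qed

theorem mainTheorem4:
  fixes m n k :: nat
  assumes "3 \<le> k" and "k \<le> n" and "n \<le> m"
  shows "rb (Kmn m n) (matching_graph k) = ext m n (matching_graph (k - 1)) + 2
       \<and> ext m n (matching_graph (k - 1)) + 2 = m * (k - 2) + 2"
proof -
  have "k - 1 = Suc (k - 2)" "k = k - 2 + 2"
    using assms(1) by simp_all
  then have ext: "ext m n (matching_graph (k - 1)) = m * (k - 2)"
    using ext_matching_graph[of "k - 2" n m] assms by simp
  have "k - 2 < n" "0 < m"
    using assms by linarith+
  then obtain c0 where "m * (k - 2) + 1 \<le> card (c0 ` Kmn m n)"
    "\<not> has_rainbow (Kmn m n) c0 (matching_graph (k - 2 + 2))"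
    by (rule rainbow_free_colouring)
  then have "rb (Kmn m n) (matching_graph k) = m * (k - 2) + 2"
    using \<open>k = k - 2 + 2\<close> by (intro rb_eqI[of _ _ _ c0] has_rainbow_if_many_colours[OF assms]) simp_all
  with ext show ?thesis
    by simp
qed

end
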